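(* Let $n\ge8$ be even and let $\varphi$ be a smooth skew-morphism of $D_n$ with $\mathrm{Ker}\,\varphi=\langle a^2,b\rangle$, power function $\pi$ and order $k$. Then one of the following holds. (I) There exist integers $r,s\in\{0,\dots,n/2-1\}$, $u$ with $\gcd(u,n/2)=1$, and $e\in\{1,\dots,k-1\}$ such that for all integers $i$: $\varphi(a^{2i})=a^{2iu}$, $\varphi(a^{2i+1})=a^{2iu+2r+1}$, $\varphi(ba^{2i})=ba^{2iu+2s}$, $\varphi(ba^{2i+1})=ba^{2r+2s+2iu+1}$, and $\pi(a^{2i})\equiv\pi(ba^{2i})\equiv1$, $\pi(a^{2i+1})\equiv\pi(ba^{2i+1})\equiv e\pmod k$; and moreover: $u-1-2r\not\equiv0\pmod{n/2}$; $k$ is the smallest positive integer with $r\sigma(u,k)\equiv0$ and $s\sigma(u,k)\equiv0\pmod{n/2}$; $\gcd(e,k)=1$, $e\not\equiv1\pmod k$, $e^2\equiv1\pmod k$, $u^{e-1}\equiv1\pmod{n/2}$; $r\sigma(u,e-1)\equiv u-2r-1\pmod{n/2}$; and $s\sigma(u,e-1)\equiv -u+2r+1\pmod{n/2}$. (II) There exist integers $r,s\in\{0,\dots,n/2-1\}$, $u$ with $\gcd(u,n/2)=1$, and an odd integer $e>1$ such that $k=2(e-1)$ and for all integers $i$: $\varphi(a^{2i})=a^{2iu}$, $\varphi(a^{2i+1})=ba^{2r-2iu+1}$, $\varphi(ba^{2i})=ba^{2s+2iu}$, $\varphi(ba^{2i+1})=a^{2r-2s-2iu+1}$, and $\pi(a^{2i})\equiv\pi(ba^{2i})\equiv1$,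 $\pi(a^{2i+1})\equiv\pi(ba^{2i+1})\equiv e\pmod k$; and moreover: $u^{e-1}\equiv-1\pmod{n/2}$; $s\sigma(u,e-1)\equiv u+2r+1\pmod{n/2}$; and $r\xi(u,e-1)\equiv s\zeta(u,e-1)-1\pmod{n/2}$.
   Context: $D_n=\langle a,b\mid a^n=b^2=1,\ b^{-1}ab=a^{-1}\rangle$. A skew-morphism of a finite group $A$ is a permutation $\varphi$ of the set $A$ with $\varphi(1)=1$ for which there exists a function $\pi:A\to\mathbb{Z}_k$, where $k$ is the order of $\varphi$, such that $\varphi(xy)=\varphi(x)\varphi^{\pi(x)}(y)$ for all $x,y\in A$; $\pi$ is the power function. The kernel is $\mathrm{Ker}\,\varphi=\{x:\pi(x)=1\}$, and the core is $\mathrm{Core}\,\varphi=\bigcap_{i=1}^k\varphi^i(\mathrm{Ker}\,\varphi)$. $\varphi$ is smooth if $\varphi(x)\in x\,\mathrm{Core}\,\varphi$ for all $x$. For integers $u$ and $j\ge0$: $\sigma(u,j)=\sum_{i=1}^{j}u^{i-1}$, $\xi(u,j)=\sum_{i=1}^{j}(-u)^{i-1}$, and for even $j$, $\zeta(u,j)=\sum_{i=1}^{j/2}u^{2(i-1)}$. *)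

theory Defs
  imports "HOL-Algebra.Algebra" "HOL-Number_Theory.Cong"
begin

text \<open>The dihedral group D_n of order 2n. The element (f, j) represents b^f a^j
  (f = False: a^j, f = True: b a^j), with j taken in {0..n-1}.
  Multiplication uses a^i b = b a^{-i}.\<close>
definition dihedral :: "nat \<Rightarrow> (bool \<times> int) monoid" where
  "dihedral n = \<lparr> carrier = (UNIV :: bool set) \<times> {0..<int n},
     monoid.mult = (\<lambda>(f, i) (g, j). (f \<noteq> g, ((if g then - i else i) + j) mod int n)),
     one = (False, 0) \<rparr>"

definition da :: "nat \<Rightarrow> int \<Rightarrow> bool \<times> int" where
  "da n m = (False, m mod int n)"

definition dba :: "nat \<Rightarrow> int \<Rightarrow> bool \<times> int" where
  "dba n m = (True, m mod int n)"

definition perm_order :: "('a, 'b) monoid_scheme \<Rightarrow> ('a \<Rightarrow> 'a) \<Rightarrow> nat" where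
  "perm_order G \<phi> = (LEAST k. 0 < k \<and> (\<forall>x\<in>carrier G. (\<phi> ^^ k) x = x))"

text \<open>Skew-morphism with power function \<pi> (values in {0..k-1} representing Z_k).\<close>
definition skew_morphism ::
    "('a, 'b) monoid_scheme \<Rightarrow> ('a \<Rightarrow> 'a) \<Rightarrow> ('a \<Rightarrow> nat) \<Rightarrow> bool" where
  "skew_morphism G \<phi> \<pi> \<longleftrightarrow>
     bij_betw \<phi> (carrier G) (carrier G) \<and> \<phi> \<one>\<^bsub>G\<^esub> = \<one>\<^bsub>G\<^esub> \<and>
     (\<forall>x\<in>carrier G. \<pi> x < perm_order G \<phi>) \<and>
     (\<forall>x\<in>carrier G. \<forall>y\<in>carrier G.
        \<phi> (x \<otimes>\<^bsub>G\<^esub> y) = \<phi> x \<otimes>\<^bsub>G\<^esub> (\<phi> ^^ \<pi> x) y)"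

definition skew_kernel ::
    "('a, 'b) monoid_scheme \<Rightarrow> ('a \<Rightarrow> 'a) \<Rightarrow> ('a \<Rightarrow> nat) \<Rightarrow> 'a set" where
  "skew_kernel G \<phi> \<pi> = {x \<in> carrier G. [\<pi> x = 1] (mod perm_order G \<phi>)}"

definition skew_core ::
    "('a, 'b) monoid_scheme \<Rightarrow> ('a \<Rightarrow> 'a) \<Rightarrow> ('a \<Rightarrow> nat) \<Rightarrow> 'a set" where
  "skew_core G \<phi> \<pi> = (\<Inter>i\<in>{1..perm_order G \<phi>}. (\<phi> ^^ i) ` skew_kernel G \<phi> \<pi>)"

definition smooth_skew ::
    "('a, 'b) monoid_scheme \<Rightarrow> ('a \<Rightarrow> 'a) \<Rightarrow> ('a \<Rightarrow> nat) \<Rightarrow> bool" where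
  "smooth_skew G \<phi> \<pi> \<longleftrightarrow> skew_morphism G \<phi> \<pi> \<and>
     (\<forall>x\<in>carrier G. \<phi> x \<in> x <#\<^bsub>G\<^esub> skew_core G \<phi> \<pi>)"

definition sigma :: "int \<Rightarrow> nat \<Rightarrow> int" where
  "sigma u j = (\<Sum>i=1..j. u ^ (i - 1))"

definition xi :: "int \<Rightarrow> nat \<Rightarrow> int" where
  "xi u j = (\<Sum>i=1..j. (- u) ^ (i - 1))"

text \<open>Only used for even j.\<close>
definition zeta :: "int \<Rightarrow> nat \<Rightarrow> int" where
  "zeta u j = (\<Sum>i=1..j div 2. u ^ (2 * (i - 1)))"

end

(*
  Smoothness forces \<phi> to preserve the index-2 subgroup K = \<langle>a^2, b\<rangle> = Ker \<phi>, and on K the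
  skew-morphism identity says that \<phi> is multiplicative. Hence \<phi> is determined by
  \<phi>(a^2) = a^(2u), \<phi>(b) = b a^(2s) and \<phi>(a) \<in> {a^(2r+1), b a^(2r+1)}, while \<pi> is 1 on K and a
  constant e off K. Expanding \<phi>(a a), \<phi>(a a^2) and \<phi>(a b) in two ways gives the congruences
  for u^(e-1), r and s (with \<sigma>, or with \<xi> and \<zeta> when \<phi>(a) is a reflection), and the order k
  is the least j for which \<phi>^j fixes the generators a and b.
*)

theory Submission
  imports Defs
begin

section \<open>The dihedral group\<close>

lemma dihedral_carrier: "carrier (dihedral n) = UNIV \<times> {0..<int n}"
  by (simp add: dihedral_def)

lemma dihedral_mult:
  "(f, i) \<otimes>\<^bsub>dihedral n\<^esub> (g, j) = (f \<noteq> g, ((if g then - i else i) + j) mod int n)"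
  by (simp add: dihedral_def)

lemma dihedral_one: "\<one>\<^bsub>dihedral n\<^esub> = (False, 0)"
  by (simp add: dihedral_def)

lemma dihedral_assoc:
  "(x \<otimes>\<^bsub>dihedral n\<^esub> y) \<otimes>\<^bsub>dihedral n\<^esub> z = x \<otimes>\<^bsub>dihedral n\<^esub> (y \<otimes>\<^bsub>dihedral n\<^esub> z)"
proof -
  obtain f i g j h l where "x = (f, i)" "y = (g, j)" "z = (h, l)" by (metis prod.exhaust)
  then show ?thesis
    by (cases g; cases h; simp add: dihedral_mult mod_add_left_eq mod_add_right_eq mod_minus_eq
        mod_diff_left_eq mod_diff_right_eq algebra_simps)
qed

lemma group_dihedral: assumes "0 < n" shows "group (dihedral n)"
proof (rule groupI)
  show "\<one>\<^bsub>dihedral n\<^esub> \<in> carrier (dihedral n)"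
    using assms by (simp add: dihedral_one dihedral_carrier)
next
  fix x y assume "x \<in> carrier (dihedral n)" "y \<in> carrier (dihedral n)"
  then show "x \<otimes>\<^bsub>dihedral n\<^esub> y \<in> carrier (dihedral n)"
    using assms by (cases x; cases y) (simp add: dihedral_carrier dihedral_mult)
next
  fix x assume "x \<in> carrier (dihedral n)"
  then show "\<one>\<^bsub>dihedral n\<^esub> \<otimes>\<^bsub>dihedral n\<^esub> x = x"
    by (cases x) (auto simp: dihedral_one dihedral_mult dihedral_carrier)
next
  fix x assume x: "x \<in> carrier (dihedral n)"
  obtain f i where xf: "x = (f, i)" by (metis prod.exhaust)
  have "(f, if f then i else - i mod int n) \<otimes>\<^bsub>dihedral n\<^esub> x = \<one>\<^bsub>dihedral n\<^esub>"
    by (cases f) (simp_all add: xf dihedral_mult dihedral_one mod_add_left_eq)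
  moreover have "(f, if f then i else - i mod int n) \<in> carrier (dihedral n)"
    using x assms by (simp add: xf dihedral_carrier)
  ultimately show "\<exists>y\<in>carrier (dihedral n). y \<otimes>\<^bsub>dihedral n\<^esub> x = \<one>\<^bsub>dihedral n\<^esub>" by blast
qed (rule dihedral_assoc)

lemma da_mult_da: "da n t \<otimes>\<^bsub>dihedral n\<^esub> da n t' = da n (t + t')"
  by (simp add: da_def dihedral_mult mod_add_eq)

lemma da_mult_dba: "da n t \<otimes>\<^bsub>dihedral n\<^esub> dba n t' = dba n (t' - t)"
  by (simp add: da_def dba_def dihedral_mult mod_diff_eq)

lemma dba_mult_da: "dba n t \<otimes>\<^bsub>dihedral n\<^esub> da n t' = dba n (t + t')"
  by (simp add: da_def dba_def dihedral_mult mod_add_eq)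

lemma dba_mult_dba: "dba n t \<otimes>\<^bsub>dihedral n\<^esub> dba n t' = da n (t' - t)"
  by (simp add: da_def dba_def dihedral_mult mod_diff_eq)

lemmas da_dba_mult = da_mult_da da_mult_dba dba_mult_da dba_mult_dba

lemma da_in_carrier: "0 < n \<Longrightarrow> da n t \<in> carrier (dihedral n)"
  and dba_in_carrier: "0 < n \<Longrightarrow> dba n t \<in> carrier (dihedral n)"
  by (simp_all add: da_def dba_def dihedral_carrier)

lemma da_eq_iff: "da n t = da n t' \<longleftrightarrow> [t = t'] (mod int n)"
  and dba_eq_iff: "dba n t = dba n t' \<longleftrightarrow> [t = t'] (mod int n)"
  by (simp_all add: da_def dba_def cong_def)

lemma da_neq_dba: "da n t \<noteq> dba n t'"
  by (simp add: da_def dba_def)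

lemma dihedral_one_eq_da: "\<one>\<^bsub>dihedral n\<^esub> = da n 0"
  by (simp add: da_def dihedral_one)

lemma dihedral_carrier_eq_da_dba:
  "x \<in> carrier (dihedral n) \<Longrightarrow> x = (if fst x then dba n (snd x) else da n (snd x))"
  by (auto simp: dihedral_carrier da_def dba_def)

lemma dihedral_carrier_parity_cases:
  assumes "x \<in> carrier (dihedral n)"
  obtains t where "x = da n (2*t)" | t where "x = dba n (2*t)"
    | t where "x = da n (2*t + 1)" | t where "x = dba n (2*t + 1)"
proof -
  obtain t where "snd x = 2*t \<or> snd x = 2*t + 1"
    by (metis oddE evenE)
  then show ?thesis
    using dihedral_carrier_eq_da_dba[OF assms] that by (cases "fst x") auto
qed

definition even_dihedral :: "nat \<Rightarrow> (bool \<times> int) set" where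
  "even_dihedral n = {x \<in> carrier (dihedral n). even (snd x)}"

lemma even_mod_iff: "even n \<Longrightarrow> even (t mod int n) \<longleftrightarrow> even (t::int)"
  by (metis dvd_mod_iff even_of_nat)

lemma da_in_even_dihedral_iff: "0 < n \<Longrightarrow> even n \<Longrightarrow> da n t \<in> even_dihedral n \<longleftrightarrow> even t"
  and dba_in_even_dihedral_iff: "0 < n \<Longrightarrow> even n \<Longrightarrow> dba n t \<in> even_dihedral n \<longleftrightarrow> even t"
  by (simp_all add: even_dihedral_def da_in_carrier dba_in_carrier)
    (simp_all add: da_def dba_def even_mod_iff)

lemma even_dihedral_cases:
  assumes "x \<in> even_dihedral n"
  obtains t where "x = da n (2*t)" | t where "x = dba n (2*t)"
proof -
  obtain f i where x: "x = (f, i)" "0 \<le> i" "i < int n" and "even i"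
    using assms by (cases x) (auto simp: even_dihedral_def dihedral_carrier)
  then obtain t where "i = 2*t" by (auto elim!: evenE)
  with x have "x = (f, 2*t mod int n)" by simp
  then show ?thesis using that by (cases f) (auto simp: da_def dba_def)
qed

lemma subgroup_even_dihedral:
  assumes "0 < n" "even n" shows "subgroup (even_dihedral n) (dihedral n)"
proof (rule group.subgroupI[OF group_dihedral[OF assms(1)]])
  show "even_dihedral n \<subseteq> carrier (dihedral n)" by (auto simp: even_dihedral_def)
  show "even_dihedral n \<noteq> {}" using da_in_even_dihedral_iff[OF assms, of 0] by auto
next
  have inv: "inv\<^bsub>dihedral n\<^esub> (da n t) = da n (- t)" "inv\<^bsub>dihedral n\<^esub> (dba n t) = dba n t" for t
    by (auto intro!: group.inv_equality[OF group_dihedral[OF assms(1)]]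
        simp: da_in_carrier dba_in_carrier assms(1) da_dba_mult dihedral_one_eq_da)
  fix x assume "x \<in> even_dihedral n"
  then show "inv\<^bsub>dihedral n\<^esub> x \<in> even_dihedral n"
    by (cases rule: even_dihedral_cases) (simp_all add: inv assms da_in_even_dihedral_iff dba_in_even_dihedral_iff)
next
  fix x y assume "x \<in> even_dihedral n" "y \<in> even_dihedral n"
  then show "x \<otimes>\<^bsub>dihedral n\<^esub> y \<in> even_dihedral n"
    using assms by (elim even_dihedral_cases)
      (auto simp: da_dba_mult da_in_even_dihedral_iff dba_in_even_dihedral_iff)
qed

lemma generate_eq_even_dihedral:
  assumes "0 < n" "even n"
  shows "generate (dihedral n) {da n 2, dba n 0} = even_dihedral n"
proof
  show "generate (dihedral n) {da n 2, dba n 0} \<subseteq> even_dihedral n"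
    by (rule group.generate_subgroup_incl[OF group_dihedral[OF assms(1)] _ subgroup_even_dihedral[OF assms]])
      (use assms in \<open>auto simp: da_in_even_dihedral_iff dba_in_even_dihedral_iff\<close>)
next
  have da_nat: "da n (2 * int j) \<in> generate (dihedral n) {da n 2, dba n 0}" for j
  proof (induction j)
    case 0
    show ?case using generate.one[of "dihedral n"] by (simp add: dihedral_one_eq_da)
  next
    case (Suc j)
    have "da n 2 \<otimes>\<^bsub>dihedral n\<^esub> da n (2 * int j) \<in> generate (dihedral n) {da n 2, dba n 0}"
      by (rule generate.eng[OF generate.incl Suc]) simp
    then show ?case by (simp add: da_dba_mult algebra_simps)
  qed
  have da_even: "da n (2 * t) \<in> generate (dihedral n) {da n 2, dba n 0}" for t
  proof -
    have "da n (2 * t) = da n (2 * int (nat (t mod int n)))"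
      using assms(1) by (simp add: da_eq_iff cong_def mod_mult_right_eq)
    then show ?thesis using da_nat by metis
  qed
  show "even_dihedral n \<subseteq> generate (dihedral n) {da n 2, dba n 0}"
  proof
    fix x assume "x \<in> even_dihedral n"
    then show "x \<in> generate (dihedral n) {da n 2, dba n 0}"
    proof (cases rule: even_dihedral_cases)
      case (2 t)
      have "dba n 0 \<otimes>\<^bsub>dihedral n\<^esub> da n (2*t) \<in> generate (dihedral n) {da n 2, dba n 0}"
        by (rule generate.eng[OF generate.incl da_even]) simp
      then show ?thesis by (simp add: 2 da_dba_mult)
    qed (simp add: da_even)
  qed
qed

section \<open>The sums \<sigma>, \<xi> and \<zeta>\<close>

lemma sigma_Suc_right: "sigma u (Suc j) = sigma u j + u ^ j"
  by (simp add: sigma_def)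

lemma sigma_Suc: "sigma u (Suc j) = 1 + u * sigma u j"
proof (induction j)
  case (Suc j)
  have "sigma u (Suc (Suc j)) = sigma u (Suc j) + u ^ Suc j" by (rule sigma_Suc_right)
  also have "\<dots> = 1 + u * (sigma u j + u ^ j)" by (simp only: Suc) (simp add: algebra_simps)
  finally show ?case by (simp only: sigma_Suc_right)
qed (simp add: sigma_def)

lemma sigma_0 [simp]: "sigma u 0 = 0"
  by (simp add: sigma_def)

lemma sigma_add: "sigma u (p + q) = sigma u p + u ^ p * sigma u q"
  by (induction q) (simp_all add: sigma_Suc_right algebra_simps power_add)

lemma sigma_eq_sum_lessThan: "sigma u j = (\<Sum>i<j. u ^ i)"
  by (induction j) (simp_all add: sigma_Suc_right)

lemma power_minus_one_eq_sigma: "u ^ j - 1 = (u - 1) * sigma u j"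
  unfolding sigma_eq_sum_lessThan by (rule power_diff_1_eq)

lemma zeta_0 [simp]: "zeta u 0 = 0"
  by (simp add: zeta_def)

lemma zeta_Suc_right: "zeta u (2 * Suc l) = zeta u (2 * l) + u ^ (2 * l)"
  by (simp add: zeta_def)

lemma zeta_Suc: "zeta u (2 * Suc l) = 1 + u\<^sup>2 * zeta u (2 * l)"
proof (induction l)
  case (Suc l)
  have "zeta u (2 * Suc (Suc l)) = zeta u (2 * Suc l) + u ^ (2 * Suc l)" by (rule zeta_Suc_right)
  also have "\<dots> = 1 + u\<^sup>2 * (zeta u (2 * l) + u ^ (2 * l))"
    by (simp only: Suc) (simp add: algebra_simps power_add power_mult power2_eq_square)
  finally show ?case by (simp only: zeta_Suc_right)
qed (simp add: zeta_def)

lemma zeta_add: "zeta u (2 * (p + q)) = zeta u (2 * p) + u ^ (2 * p) * zeta u (2 * q)"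
proof (induction q)
  case (Suc q)
  have "zeta u (2 * (p + Suc q)) = zeta u (2 * (p + q)) + u ^ (2 * (p + q))"
    using zeta_Suc_right[of u "p + q"] by simp
  also have "\<dots> = zeta u (2 * p) + u ^ (2 * p) * (zeta u (2 * q) + u ^ (2 * q))"
    using Suc.IH by (simp add: algebra_simps power_add)
  finally show ?case by (simp only: zeta_Suc_right)
qed simp

lemma xi_eq_zeta: "xi u (2 * l) = (1 - u) * zeta u (2 * l)"
proof (induction l)
  case (Suc l)
  have "xi u (2 * Suc l) = xi u (2 * l) + (- u) ^ (2 * l) + (- u) ^ Suc (2 * l)"
    by (simp add: xi_def)
  also have "(- u) ^ (2 * l) = u ^ (2 * l)" by (simp add: power_mult)
  also have "(- u) ^ Suc (2 * l) = - u * u ^ (2 * l)" by (simp add: power_mult)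
  also have "xi u (2 * l) + u ^ (2 * l) + - u * u ^ (2 * l) = (1 - u) * (zeta u (2 * l) + u ^ (2 * l))"
    by (simp only: Suc.IH) (simp add: algebra_simps)
  finally show ?case by (simp only: zeta_Suc_right)
qed (simp add: xi_def)

section \<open>Skew-morphisms of finite groups\<close>

locale finite_skew_morphism = group G for G (structure) +
  fixes \<phi> :: "'a \<Rightarrow> 'a" and \<pi> :: "'a \<Rightarrow> nat"
  assumes finite_carrier: "finite (carrier G)"
    and skew_morphism: "skew_morphism G \<phi> \<pi>"
begin

lemma bij_betw_phi: "bij_betw \<phi> (carrier G) (carrier G)"
  and phi_one: "\<phi> \<one> = \<one>"
  and power_fun_less: "x \<in> carrier G \<Longrightarrow> \<pi> x < perm_order G \<phi>"
  and phi_mult: "x \<in> carrier G \<Longrightarrow> y \<in> carrier G \<Longrightarrow> \<phi> (x \<otimes> y) = \<phi> x \<otimes> (\<phi> ^^ \<pi> x) y"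
  using skew_morphism by (auto simp: skew_morphism_def)

lemma funpow_closed [simp]: "x \<in> carrier G \<Longrightarrow> (\<phi> ^^ j) x \<in> carrier G"
  using bij_betw_funpow[OF bij_betw_phi, of j] bij_betwE by blast

lemma phi_closed [simp]: "x \<in> carrier G \<Longrightarrow> \<phi> x \<in> carrier G"
  using funpow_closed[of x 1] by simp

lemma phi_inj: "x \<in> carrier G \<Longrightarrow> y \<in> carrier G \<Longrightarrow> \<phi> x = \<phi> y \<Longrightarrow> x = y"
  using bij_betw_phi by (auto simp: bij_betw_def inj_on_def)

lemma phi_surj: "y \<in> carrier G \<Longrightarrow> \<exists>x\<in>carrier G. \<phi> x = y"
  using bij_betw_phi by (metis bij_betw_imp_surj_on imageE)

text \<open>By pigeonhole two restricted iterates of \<phi> coincide, and \<phi> is injective.\<close>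
lemma ex_funpow_id: "\<exists>j>0. \<forall>x\<in>carrier G. (\<phi> ^^ j) x = x"
proof -
  define F where "F j = restrict (\<phi> ^^ j) (carrier G)" for j
  have "range F \<subseteq> carrier G \<rightarrow>\<^sub>E carrier G" by (auto simp: F_def)
  then have "finite (range F)"
    using finite_carrier by (blast intro: finite_subset finite_PiE)
  then have "\<not> inj F" using finite_imageD infinite_UNIV_nat by blast
  then obtain i j where ij: "F i = F j" "i < j"
    unfolding inj_def by (metis linorder_neqE_nat)
  have "(\<phi> ^^ (j - i)) x = x" if x: "x \<in> carrier G" for x
  proof -
    have "(\<phi> ^^ i) ((\<phi> ^^ (j - i)) x) = (\<phi> ^^ j) x"
      using ij(2) by (simp add: funpow_add[symmetric, THEN fun_cong, simplified comp_def])
    also have "\<dots> = (\<phi> ^^ i) x" using ij(1) x unfolding F_def by (metis restrict_apply')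
    finally show ?thesis
      using bij_betw_funpow[OF bij_betw_phi, of i] x by (simp add: bij_betw_def inj_on_def)
  qed
  then show ?thesis using ij(2) by (intro exI[of _ "j - i"]) auto
qed

lemma perm_order_pos: "0 < perm_order G \<phi>"
  and funpow_perm_order: "x \<in> carrier G \<Longrightarrow> (\<phi> ^^ perm_order G \<phi>) x = x"
  using LeastI_ex[OF ex_funpow_id] by (simp_all add: perm_order_def)

lemma funpow_mod_perm_order: "x \<in> carrier G \<Longrightarrow> (\<phi> ^^ (j mod perm_order G \<phi>)) x = (\<phi> ^^ j) x"
proof (induction j rule: less_induct)
  case (less j)
  show ?case
  proof (cases "j < perm_order G \<phi>")
    case False
    then obtain d where d: "j = d + perm_order G \<phi>" by (metis le_add_diff_inverse2 not_less)
    then have "(\<phi> ^^ j) x = (\<phi> ^^ d) x" using less.prems by (simp add: funpow_add funpow_perm_order)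
    moreover have "d < j" "d mod perm_order G \<phi> = j mod perm_order G \<phi>"
      using d perm_order_pos by simp_all
    ultimately show ?thesis using less.IH[of d] less.prems by simp
  qed simp
qed

lemma funpow_cong: "[p = q] (mod perm_order G \<phi>) \<Longrightarrow> x \<in> carrier G \<Longrightarrow> (\<phi> ^^ p) x = (\<phi> ^^ q) x"
  by (metis cong_def funpow_mod_perm_order)

lemma funpow_id_iff_dvd: "(\<forall>x\<in>carrier G. (\<phi> ^^ j) x = x) \<longleftrightarrow> perm_order G \<phi> dvd j"
proof
  assume id: "\<forall>x\<in>carrier G. (\<phi> ^^ j) x = x"
  have "\<not> 0 < j mod perm_order G \<phi>"
  proof
    assume "0 < j mod perm_order G \<phi>"
    then have "perm_order G \<phi> \<le> j mod perm_order G \<phi>"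
      using id funpow_mod_perm_order unfolding perm_order_def by (auto intro!: Least_le)
    then show False using perm_order_pos mod_less_divisor not_le by blast
  qed
  then show "perm_order G \<phi> dvd j" by (simp add: dvd_eq_mod_eq_0)
qed (auto simp: funpow_cong[of _ 0] cong_0_iff)

lemma funpow_eq_imp_cong:
  assumes "\<forall>x\<in>carrier G. (\<phi> ^^ p) x = (\<phi> ^^ q) x"
  shows "[p = q] (mod perm_order G \<phi>)"
proof -
  have dvd: "perm_order G \<phi> dvd (p - q)" if pq: "\<forall>x\<in>carrier G. (\<phi> ^^ p) x = (\<phi> ^^ q) x" "q \<le> p" for p q
  proof -
    have "(\<phi> ^^ (p - q)) y = y" if y: "y \<in> carrier G" for y
    proof -
      obtain x where x: "x \<in> carrier G" "y = (\<phi> ^^ q) x"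
        using bij_betw_funpow[OF bij_betw_phi, of q] y by (metis bij_betw_imp_surj_on imageE)
      then have "(\<phi> ^^ (p - q)) y = (\<phi> ^^ p) x"
        using pq(2) by (simp add: funpow_add[symmetric, THEN fun_cong, simplified comp_def])
      then show ?thesis using pq(1) x by simp
    qed
    then show ?thesis using funpow_id_iff_dvd by blast
  qed
  show ?thesis
  proof (cases "q \<le> p")
    case True
    then show ?thesis using dvd[of p q] assms by (simp add: cong_altdef_nat)
  next
    case False
    then have "[q = p] (mod perm_order G \<phi>)" using dvd[of q p] assms by (simp add: cong_altdef_nat)
    then show ?thesis by (rule cong_sym)
  qed
qed

lemma phi_mult_kernel:
  assumes "x \<in> carrier G" "[\<pi> x = 1] (mod perm_order G \<phi>)" "y \<in> carrier G"
  shows "\<phi> (x \<otimes> y) = \<phi> x \<otimes> \<phi> y"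
  using phi_mult[of x y] funpow_cong[OF assms(2,3)] assms(1,3) by simp

lemma power_fun_mult_kernel:
  assumes x: "x \<in> carrier G" "[\<pi> x = 1] (mod perm_order G \<phi>)" and y: "y \<in> carrier G"
  shows "\<pi> (x \<otimes> y) = \<pi> y"
proof -
  have "(\<phi> ^^ \<pi> (x \<otimes> y)) z = (\<phi> ^^ \<pi> y) z" if z: "z \<in> carrier G" for z
  proof -
    have "\<phi> x \<otimes> (\<phi> y \<otimes> (\<phi> ^^ \<pi> (x \<otimes> y)) z) = \<phi> ((x \<otimes> y) \<otimes> z)"
      using phi_mult[of "x \<otimes> y" z] phi_mult_kernel[OF x y] x y z by (simp add: m_assoc)
    also have "\<dots> = \<phi> x \<otimes> (\<phi> y \<otimes> (\<phi> ^^ \<pi> y) z)"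
      using phi_mult[OF y z] phi_mult_kernel[OF x, of "y \<otimes> z"] x y z by (simp add: m_assoc)
    finally show ?thesis using x y z by simp
  qed
  then have "[\<pi> (x \<otimes> y) = \<pi> y] (mod perm_order G \<phi>)" by (simp add: funpow_eq_imp_cong)
  then show ?thesis using power_fun_less x y by (simp add: cong_def)
qed

lemma funpow_mult_of_constant_orbit:
  assumes a: "a \<in> carrier G" and const: "\<And>j. \<pi> ((\<phi> ^^ j) a) = \<pi> a" and w: "w \<in> carrier G"
  shows "(\<phi> ^^ j) (a \<otimes> w) = (\<phi> ^^ j) a \<otimes> (\<phi> ^^ (j * \<pi> a)) w"
proof (induction j)
  case (Suc j)
  have "(\<phi> ^^ Suc j) (a \<otimes> w) = \<phi> ((\<phi> ^^ j) a \<otimes> (\<phi> ^^ (j * \<pi> a)) w)" by (simp add: Suc)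
  also have "\<dots> = (\<phi> ^^ Suc j) a \<otimes> (\<phi> ^^ \<pi> a) ((\<phi> ^^ (j * \<pi> a)) w)"
    using phi_mult[of "(\<phi> ^^ j) a"] const a w by simp
  finally show ?case by (simp add: funpow_add[symmetric, THEN fun_cong, simplified comp_def] add.commute)
qed simp

lemma power_fun_square_cong_one:
  assumes a: "a \<in> carrier G" and "[\<pi> (a \<otimes> a) = 1] (mod perm_order G \<phi>)"
    and const: "\<And>j. \<pi> ((\<phi> ^^ j) a) = \<pi> a"
  shows "[\<pi> a * \<pi> a = 1] (mod perm_order G \<phi>)"
proof -
  have "(\<phi> ^^ (\<pi> a * \<pi> a)) z = (\<phi> ^^ 1) z" if z: "z \<in> carrier G" for z
  proof -
    have "\<phi> a \<otimes> ((\<phi> ^^ \<pi> a) a \<otimes> (\<phi> ^^ (\<pi> a * \<pi> a)) z) = \<phi> (a \<otimes> (a \<otimes> z))"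
      using phi_mult[of a "a \<otimes> z"] funpow_mult_of_constant_orbit[OF a const z, of "\<pi> a"] a z by simp
    also have "\<dots> = \<phi> (a \<otimes> a) \<otimes> \<phi> z"
      using phi_mult_kernel[OF _ assms(2) z] a z by (simp add: m_assoc)
    also have "\<dots> = \<phi> a \<otimes> ((\<phi> ^^ \<pi> a) a \<otimes> \<phi> z)"
      using phi_mult[OF a a] a z by (simp add: m_assoc)
    finally show ?thesis using a z by simp
  qed
  then show ?thesis by (rule funpow_eq_imp_cong[rule_format])
qed

end

section \<open>Smooth skew-morphisms of D_n with kernel \<langle>a^2, b\<rangle>\<close>

locale dihedral_smooth_skew =
  fixes n :: nat and \<phi> :: "bool \<times> int \<Rightarrow> bool \<times> int" and \<pi> :: "bool \<times> int \<Rightarrow> nat"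
  assumes n_ge_8: "n \<ge> 8" and even_n: "even n"
    and smooth: "smooth_skew (dihedral n) \<phi> \<pi>"
    and kernel_eq: "skew_kernel (dihedral n) \<phi> \<pi> = generate (dihedral n) {da n 2, dba n 0}"
begin

abbreviation "G \<equiv> dihedral n"
abbreviation "k \<equiv> perm_order (dihedral n) \<phi>"
definition m :: int where "m = int (n div 2)"
abbreviation "K \<equiv> even_dihedral n"

lemma n_pos: "0 < n"
  using n_ge_8 by simp

lemma int_n_eq: "int n = 2 * m"
  using even_n by (auto simp: m_def elim!: evenE)

lemma m_ge_4: "m \<ge> 4"
  using n_ge_8 even_n by (simp add: m_def)

sublocale finite_skew_morphism G \<phi> \<pi>
  using group_dihedral[OF n_pos] smooth
  by (simp add: finite_skew_morphism_def finite_skew_morphism_axioms_def smooth_skew_def dihedral_carrier)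

lemma da_closed [simp]: "da n t \<in> carrier G"
  and dba_closed [simp]: "dba n t \<in> carrier G"
  using n_pos by (simp_all add: da_in_carrier dba_in_carrier)

lemma da_in_K_iff [simp]: "da n t \<in> K \<longleftrightarrow> even t"
  and dba_in_K_iff [simp]: "dba n t \<in> K \<longleftrightarrow> even t"
  using n_pos even_n by (simp_all add: da_in_even_dihedral_iff dba_in_even_dihedral_iff)

lemma K_subset_carrier: "K \<subseteq> carrier G"
  by (auto simp: even_dihedral_def)

lemma da_eq_iff_half_dvd: "x - y = 2 * z \<Longrightarrow> da n x = da n y \<longleftrightarrow> m dvd z"
  and dba_eq_iff_half_dvd: "x - y = 2 * z \<Longrightarrow> dba n x = dba n y \<longleftrightarrow> m dvd z"
  by (simp_all add: da_eq_iff dba_eq_iff cong_iff_dvd_diff int_n_eq)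

lemma mem_K_iff: "x \<in> K \<longleftrightarrow> x \<in> carrier G \<and> [\<pi> x = 1] (mod k)"
proof -
  have "{x \<in> carrier G. [\<pi> x = 1] (mod k)} = K"
    using kernel_eq generate_eq_even_dihedral[OF n_pos even_n] by (simp add: skew_kernel_def)
  then show ?thesis by blast
qed

lemma perm_order_ge_2: "2 \<le> k"
  using mem_K_iff[of "da n 1"] perm_order_pos by (cases "k = 1") auto

lemma power_fun_K: assumes "x \<in> K" shows "\<pi> x = 1"
proof -
  have "\<pi> x mod k = 1" "\<pi> x < k"
    using assms mem_K_iff[of x] power_fun_less[of x] perm_order_ge_2 by (simp_all add: cong_def)
  then show ?thesis by simp
qed

lemma phi_mult_K: "x \<in> K \<Longrightarrow> y \<in> carrier G \<Longrightarrow> \<phi> (x \<otimes>\<^bsub>G\<^esub> y) = \<phi> x \<otimes>\<^bsub>G\<^esub> \<phi> y"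
  using phi_mult_kernel mem_K_iff by blast

lemma skew_core_subset_K: "skew_core G \<phi> \<pi> \<subseteq> K"
proof
  fix x assume "x \<in> skew_core G \<phi> \<pi>"
  then have "x \<in> (\<phi> ^^ k) ` skew_kernel G \<phi> \<pi>"
    using perm_order_pos by (auto simp: skew_core_def)
  then show "x \<in> K"
    using kernel_eq generate_eq_even_dihedral[OF n_pos even_n] K_subset_carrier funpow_perm_order by auto
qed

text \<open>Smoothness puts \<phi> x in the coset x K, and K has index 2.\<close>
lemma phi_in_K_iff: assumes x: "x \<in> carrier G" shows "\<phi> x \<in> K \<longleftrightarrow> x \<in> K"
proof -
  obtain h where h: "h \<in> K" "\<phi> x = x \<otimes>\<^bsub>G\<^esub> h"
    using smooth x skew_core_subset_K unfolding smooth_skew_def l_coset_def by blast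
  obtain t where ht: "h = da n (2*t) \<or> h = dba n (2*t)"
    using h(1) by (cases rule: even_dihedral_cases) auto
  have "x \<otimes>\<^bsub>G\<^esub> h \<in> K \<longleftrightarrow> x \<in> K"
    using x by (cases rule: dihedral_carrier_parity_cases) (use ht in \<open>auto simp: da_dba_mult\<close>)
  with h(2) show ?thesis by simp
qed

lemma funpow_in_K_iff: "x \<in> carrier G \<Longrightarrow> (\<phi> ^^ j) x \<in> K \<longleftrightarrow> x \<in> K"
  by (induction j) (simp_all add: phi_in_K_iff)

lemma funpow_mult_K:
  assumes "x \<in> K" "y \<in> carrier G"
  shows "(\<phi> ^^ j) (x \<otimes>\<^bsub>G\<^esub> y) = (\<phi> ^^ j) x \<otimes>\<^bsub>G\<^esub> (\<phi> ^^ j) y"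
proof (induction j)
  case (Suc j)
  have "(\<phi> ^^ j) x \<in> K" using assms K_subset_carrier funpow_in_K_iff by blast
  then show ?case using Suc assms by (simp add: phi_mult_K)
qed simp

definition e :: nat where "e = \<pi> (da n 1)"

lemma power_fun_notin_K: assumes y: "y \<in> carrier G" "y \<notin> K" shows "\<pi> y = e"
proof -
  have x: "y \<otimes>\<^bsub>G\<^esub> da n (- 1) \<in> K"
    using y by (cases rule: dihedral_carrier_parity_cases) (simp_all add: da_dba_mult)
  have "y = (y \<otimes>\<^bsub>G\<^esub> da n (- 1)) \<otimes>\<^bsub>G\<^esub> da n 1"
    using y by (simp add: m_assoc da_dba_mult flip: dihedral_one_eq_da)
  then show ?thesis
    using power_fun_mult_kernel[of _ "da n 1"] mem_K_iff x by (metis da_closed e_def)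
qed

lemma power_fun_da_even [simp]: "\<pi> (da n (2 * i)) = 1"
  and power_fun_dba_even [simp]: "\<pi> (dba n (2 * i)) = 1"
  and power_fun_da_odd [simp]: "\<pi> (da n (2 * i + 1)) = e"
  and power_fun_dba_odd [simp]: "\<pi> (dba n (2 * i + 1)) = e"
  by (simp_all add: power_fun_K power_fun_notin_K)

lemma e_square_cong: "[e * e = 1] (mod k)"
proof -
  have "\<pi> ((\<phi> ^^ j) (da n 1)) = e" for j
    using funpow_in_K_iff[of "da n 1" j] by (simp add: power_fun_notin_K)
  then show ?thesis
    using power_fun_square_cong_one[of "da n 1"] mem_K_iff[of "da n 2"]
    unfolding e_def by (simp add: da_dba_mult)
qed

lemma e_not_cong_1: "\<not> [e = 1] (mod k)"
  using mem_K_iff[of "da n 1"] by (simp add: e_def)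

lemma e_less: "e < k"
  using power_fun_less[of "da n 1"] by (simp add: e_def)

lemma coprime_e_perm_order: "coprime e k"
  using e_square_cong by (metis cong_imp_coprime cong_sym coprime_1_left coprime_mult_left_iff)

lemma e_pos: "0 < e"
  using e_square_cong perm_order_ge_2 by (cases e) (auto simp: cong_def)

lemma m_not_dvd_2: "\<not> m dvd 2"
  using m_ge_4 zdvd_imp_le by fastforce

definition u :: int where "u = snd (\<phi> (da n 2)) div 2"

lemma da_double_mod: "da n (2 * (t mod m)) = da n (2 * t)"
proof (rule da_eq_iff_half_dvd[THEN iffD2])
  show "2 * (t mod m) - 2 * t = 2 * (t mod m - t)" by simp
  show "m dvd t mod m - t" by (metis mod_eq_dvd_iff mod_mod_trivial)
qed

lemma dba_double_mod: "dba n (2 * (t mod m)) = dba n (2 * t)"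
proof (rule dba_eq_iff_half_dvd[THEN iffD2])
  show "2 * (t mod m) - 2 * t = 2 * (t mod m - t)" by simp
  show "m dvd t mod m - t" by (metis mod_eq_dvd_iff mod_mod_trivial)
qed

lemma snd_da_double: "snd (da n (2 * t)) = 2 * (t mod m)"
  by (simp add: da_def int_n_eq mod_mult_mult1)

lemma snd_dba_double: "snd (dba n (2 * t)) = 2 * (t mod m)"
  by (simp add: dba_def int_n_eq mod_mult_mult1)

text \<open>The image of a^2 lies in K; were it a reflection, the image of a^4 would be trivial.\<close>
lemma phi_da_2: "\<phi> (da n 2) = da n (2 * u)" and u_bounds: "0 \<le> u" "u < m"
proof -
  define y where "y = \<phi> (da n 2)"
  have "y \<in> K" using phi_in_K_iff[of "da n 2"] by (simp add: y_def)
  then obtain t where t: "y = da n (2*t) \<or> y = dba n (2*t)" by (cases rule: even_dihedral_cases) auto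
  have "y \<noteq> dba n (2*t)"
  proof
    assume y_dba: "y = dba n (2*t)"
    have "\<phi> (da n 4) = \<phi> (da n 2 \<otimes>\<^bsub>G\<^esub> da n 2)" by (simp add: da_dba_mult)
    also have "\<dots> = y \<otimes>\<^bsub>G\<^esub> y" using phi_mult_K[of "da n 2" "da n 2"] by (simp add: y_def)
    also have "\<dots> = \<phi> (da n 0)" using phi_one by (simp add: y_dba da_dba_mult dihedral_one_eq_da)
    finally have "da n 4 = da n 0" by (simp add: phi_inj)
    then show False using da_eq_iff_half_dvd[of 4 0 2] m_not_dvd_2 by simp
  qed
  with t have "y = da n (2*t)" by blast
  moreover have "u = t mod m" by (simp add: u_def y_def[symmetric] \<open>y = da n (2*t)\<close> snd_da_double)
  ultimately show "\<phi> (da n 2) = da n (2 * u)" "0 \<le> u" "u < m"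
    using m_ge_4 by (simp_all add: y_def da_double_mod)
qed

lemma phi_da_even: "\<phi> (da n (2 * i)) = da n (2 * i * u)"
proof -
  have nat_case: "\<phi> (da n (2 * int j)) = da n (2 * int j * u)" for j
  proof (induction j)
    case (Suc j)
    have "\<phi> (da n (2 * int (Suc j))) = \<phi> (da n 2 \<otimes>\<^bsub>G\<^esub> da n (2 * int j))"
      by (simp add: da_dba_mult algebra_simps)
    also have "\<dots> = \<phi> (da n 2) \<otimes>\<^bsub>G\<^esub> \<phi> (da n (2 * int j))" by (rule phi_mult_K) simp_all
    also have "\<dots> = da n (2 * int (Suc j) * u)"
      by (simp only: Suc.IH phi_da_2 da_mult_da) (simp add: algebra_simps)
    finally show ?case .
  qed (simp add: phi_one dihedral_one_eq_da[symmetric])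
  have "\<phi> (da n (2 * i)) = \<phi> (da n (2 * int (nat (i mod m))))"
    using m_ge_4 by (simp add: da_double_mod)
  also have "\<dots> = da n (2 * ((i mod m) * u))"
    using nat_case[of "nat (i mod m)"] m_ge_4 by (simp add: mult.assoc)
  also have "\<dots> = da n (2 * (i * u))"
    by (metis da_double_mod mod_mult_left_eq)
  finally show ?thesis by (simp add: mult.assoc)
qed

lemma coprime_u: "gcd u m = 1"
proof (rule ccontr)
  define d where "d = gcd u m"
  assume "gcd u m \<noteq> 1"
  moreover have "0 < d" using m_ge_4 by (simp add: d_def)
  ultimately have d_ge_2: "d \<ge> 2" unfolding d_def by linarith
  obtain i w where i: "m = d * i" and w: "u = d * w"
    unfolding d_def by (meson dvd_def gcd_dvd1 gcd_dvd2)
  have i_pos: "0 < i" using zero_less_mult_pos[of d i] \<open>0 < d\<close> i m_ge_4 by simp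
  have "2 * i \<le> d * i" using d_ge_2 i_pos by simp
  then have i_less: "i < m" using i i_pos by linarith
  have "\<phi> (da n (2 * i)) = da n (2 * i * u)" by (rule phi_da_even)
  also have "\<dots> = \<phi> (da n 0)"
    using phi_one da_eq_iff_half_dvd[of "2 * i * u" 0 "m * w"]
    by (simp add: i w dihedral_one_eq_da algebra_simps)
  finally have "da n (2 * i) = da n 0" by (simp add: phi_inj)
  then have "m dvd i" using da_eq_iff_half_dvd[of "2 * i" 0 i] by simp
  then show False using i_pos i_less zdvd_imp_le by fastforce
qed

definition s :: int where "s = snd (\<phi> (dba n 0)) div 2"

text \<open>If \<phi>(b) were a rotation, \<phi> would map all of K to rotations and miss b.\<close>
lemma phi_dba_0: "\<phi> (dba n 0) = dba n (2 * s)" and s_bounds: "0 \<le> s" "s < m"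
proof -
  define y where "y = \<phi> (dba n 0)"
  have "y \<in> K" using phi_in_K_iff[of "dba n 0"] by (simp add: y_def)
  then obtain t where t: "y = da n (2*t) \<or> y = dba n (2*t)" by (cases rule: even_dihedral_cases) auto
  have "y \<noteq> da n (2*t)"
  proof
    assume y_da: "y = da n (2*t)"
    obtain z where z: "z \<in> carrier G" "\<phi> z = dba n 0" using phi_surj[of "dba n 0"] by auto
    then have "z \<in> K" using phi_in_K_iff[of z] by simp
    then show False
    proof (cases rule: even_dihedral_cases)
      case (1 t')
      then show False using z(2) phi_da_even by (simp add: da_neq_dba)
    next
      case (2 t')
      have "\<phi> z = \<phi> (dba n 0 \<otimes>\<^bsub>G\<^esub> da n (2*t'))" by (simp add: 2 da_dba_mult)
      also have "\<dots> = y \<otimes>\<^bsub>G\<^esub> \<phi> (da n (2*t'))" unfolding y_def by (rule phi_mult_K) simp_all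
      also have "\<dots> = da n (2*t + 2*t'*u)" by (simp add: y_da phi_da_even da_dba_mult)
      finally show False using z(2) da_neq_dba by metis
    qed
  qed
  with t have "y = dba n (2*t)" by blast
  moreover have "s = t mod m" by (simp add: s_def y_def[symmetric] \<open>y = dba n (2*t)\<close> snd_dba_double)
  ultimately show "\<phi> (dba n 0) = dba n (2 * s)" "0 \<le> s" "s < m"
    using m_ge_4 by (simp_all add: y_def dba_double_mod)
qed

lemma phi_dba_even: "\<phi> (dba n (2 * i)) = dba n (2 * s + 2 * i * u)"
proof -
  have "\<phi> (dba n (2 * i)) = \<phi> (dba n 0 \<otimes>\<^bsub>G\<^esub> da n (2 * i))" by (simp add: da_dba_mult)
  also have "\<dots> = \<phi> (dba n 0) \<otimes>\<^bsub>G\<^esub> \<phi> (da n (2 * i))" by (rule phi_mult_K) simp_all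
  finally show ?thesis by (simp add: phi_dba_0 phi_da_even da_dba_mult)
qed

definition r :: int where "r = snd (\<phi> (da n 1)) div 2"

lemma phi_da_1: "\<phi> (da n 1) = (if fst (\<phi> (da n 1)) then dba n (2 * r + 1) else da n (2 * r + 1))"
  and r_bounds: "0 \<le> r" "r < m"
proof -
  have "\<phi> (da n 1) \<in> carrier G" by simp
  then obtain f j where y: "\<phi> (da n 1) = (f, j)" "0 \<le> j" "j < 2 * m"
    by (cases "\<phi> (da n 1)") (auto simp: dihedral_carrier int_n_eq)
  moreover have "\<phi> (da n 1) \<notin> K" by (simp add: phi_in_K_iff)
  then have "odd j" using y by (simp add: even_dihedral_def dihedral_carrier int_n_eq)
  ultimately have "j = 2 * r + 1" by (simp add: r_def)
  with y show "\<phi> (da n 1) = (if fst (\<phi> (da n 1)) then dba n (2 * r + 1) else da n (2 * r + 1))"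
    "0 \<le> r" "r < m"
    by (simp_all add: da_def dba_def int_n_eq)
qed

lemma phi_da_odd: "\<phi> (da n (2 * i + 1)) = da n (2 * i * u) \<otimes>\<^bsub>G\<^esub> \<phi> (da n 1)"
proof -
  have "\<phi> (da n (2 * i + 1)) = \<phi> (da n (2 * i) \<otimes>\<^bsub>G\<^esub> da n 1)" by (simp add: da_dba_mult)
  also have "\<dots> = \<phi> (da n (2 * i)) \<otimes>\<^bsub>G\<^esub> \<phi> (da n 1)" by (rule phi_mult_K) simp_all
  finally show ?thesis by (simp add: phi_da_even)
qed

lemma phi_dba_odd: "\<phi> (dba n (2 * i + 1)) = dba n (2 * s + 2 * i * u) \<otimes>\<^bsub>G\<^esub> \<phi> (da n 1)"
proof -
  have "\<phi> (dba n (2 * i + 1)) = \<phi> (dba n (2 * i) \<otimes>\<^bsub>G\<^esub> da n 1)" by (simp add: da_dba_mult)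
  also have "\<dots> = \<phi> (dba n (2 * i)) \<otimes>\<^bsub>G\<^esub> \<phi> (da n 1)" by (rule phi_mult_K) simp_all
  finally show ?thesis by (simp add: phi_dba_even)
qed

lemma funpow_da_even: "(\<phi> ^^ j) (da n (2 * i)) = da n (2 * i * u ^ j)"
proof (induction j)
  case (Suc j)
  have "(\<phi> ^^ Suc j) (da n (2 * i)) = \<phi> (da n (2 * (i * u ^ j)))" by (simp add: Suc mult.assoc)
  also have "\<dots> = da n (2 * i * u ^ Suc j)" by (subst phi_da_even) (simp add: mult_ac)
  finally show ?case .
qed simp

lemma funpow_dba_0: "(\<phi> ^^ j) (dba n 0) = dba n (2 * (s * sigma u j))"
  by (induction j) (simp_all add: phi_dba_even sigma_Suc algebra_simps)

lemma funpow_id_iff_generators: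
  "(\<forall>x\<in>carrier G. (\<phi> ^^ j) x = x) \<longleftrightarrow>
     m dvd u ^ j - 1 \<and> (\<phi> ^^ j) (dba n 0) = dba n 0 \<and> (\<phi> ^^ j) (da n 1) = da n 1"
proof
  assume "\<forall>x\<in>carrier G. (\<phi> ^^ j) x = x"
  moreover have "da n (2 * 1 * u ^ j) = da n (2 * 1) \<longleftrightarrow> m dvd u ^ j - 1"
    by (rule da_eq_iff_half_dvd) (simp add: algebra_simps)
  ultimately show "m dvd u ^ j - 1 \<and> (\<phi> ^^ j) (dba n 0) = dba n 0 \<and> (\<phi> ^^ j) (da n 1) = da n 1"
    using funpow_da_even[of j 1] by simp
next
  assume gen: "m dvd u ^ j - 1 \<and> (\<phi> ^^ j) (dba n 0) = dba n 0 \<and> (\<phi> ^^ j) (da n 1) = da n 1"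
  have da_even: "(\<phi> ^^ j) (da n (2 * t)) = da n (2 * t)" for t
  proof -
    have "da n (2 * t * u ^ j) = da n (2 * t)"
      by (rule da_eq_iff_half_dvd[THEN iffD2, of _ _ "t * (u ^ j - 1)"])
        (simp add: algebra_simps, use gen in simp)
    then show ?thesis by (simp add: funpow_da_even)
  qed
  have dba_even: "(\<phi> ^^ j) (dba n (2 * t)) = dba n (2 * t)" for t
    using funpow_mult_K[of "dba n 0" "da n (2 * t)" j] gen da_even by (simp add: da_dba_mult)
  show "\<forall>x\<in>carrier G. (\<phi> ^^ j) x = x"
  proof
    fix x assume "x \<in> carrier G"
    then show "(\<phi> ^^ j) x = x"
    proof (cases rule: dihedral_carrier_parity_cases)
      case (3 t)
      then show ?thesis
        using funpow_mult_K[of "da n (2 * t)" "da n 1" j] gen da_even by (simp add: da_dba_mult)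
    next
      case (4 t)
      then show ?thesis
        using funpow_mult_K[of "dba n (2 * t)" "da n 1" j] gen dba_even by (simp add: da_dba_mult)
    qed (simp_all add: da_even dba_even)
  qed
qed

lemma dvd_cancel_u: "m dvd u * z \<Longrightarrow> m dvd z"
  using coprime_dvd_mult_right_iff[of m u z] coprime_u by (simp add: coprime_iff_gcd_eq_1 gcd.commute)

lemma u_power_e: "u ^ e = u * u ^ (e - 1)"
  using e_pos by (simp add: power_eq_if)

lemma sigma_e: "sigma u e = sigma u (e - 1) + u ^ (e - 1)"
  using e_pos sigma_Suc_right[of u "e - 1"] by simp

lemma phi_da_1_mult: "y \<in> carrier G \<Longrightarrow> \<phi> (da n 1 \<otimes>\<^bsub>G\<^esub> y) = \<phi> (da n 1) \<otimes>\<^bsub>G\<^esub> (\<phi> ^^ e) y"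
  using phi_mult[of "da n 1" y] by (simp add: e_def)

context
  assumes phi_da_1_rotation: "\<not> fst (\<phi> (da n 1))"
begin

lemma phi_da_1_rot: "\<phi> (da n 1) = da n (2 * r + 1)"
  using phi_da_1 phi_da_1_rotation by simp

lemma phi_da_odd_rot: "\<phi> (da n (2 * i + 1)) = da n (2 * i * u + 2 * r + 1)"
  by (simp add: phi_da_odd phi_da_1_rot da_dba_mult add.assoc)

lemma phi_dba_odd_rot: "\<phi> (dba n (2 * i + 1)) = dba n (2 * r + 2 * s + 2 * i * u + 1)"
proof -
  have "\<phi> (dba n (2 * i + 1)) = dba n (2 * s + 2 * i * u + (2 * r + 1))"
    by (simp add: phi_dba_odd phi_da_1_rot da_dba_mult)
  then show ?thesis by (simp add: algebra_simps)
qed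

lemma funpow_da_1_rot: "(\<phi> ^^ j) (da n 1) = da n (2 * (r * sigma u j) + 1)"
proof (induction j)
  case (Suc j)
  have "(\<phi> ^^ Suc j) (da n 1) = \<phi> (da n (2 * (r * sigma u j) + 1))" by (simp add: Suc)
  also have "\<dots> = da n (2 * (r * sigma u (Suc j)) + 1)"
    by (subst phi_da_odd_rot) (simp add: sigma_Suc algebra_simps)
  finally show ?case .
qed simp

text \<open>Compare the two expansions of \<phi>(a^3) = \<phi>(a a^2).\<close>
lemma u_power_cong_rot: "[u ^ (e - 1) = 1] (mod m)"
proof -
  have "da n (2 * 1 * u + 2 * r + 1) = \<phi> (da n 1 \<otimes>\<^bsub>G\<^esub> da n 2)"
    using phi_da_odd_rot[of 1] by (simp add: da_dba_mult)
  also have "\<dots> = \<phi> (da n 1) \<otimes>\<^bsub>G\<^esub> (\<phi> ^^ e) (da n (2 * 1))" by (simp add: phi_da_1_mult)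
  also have "\<dots> = da n (2 * r + 1 + 2 * u ^ e)"
    by (simp only: funpow_da_even phi_da_1_rot da_mult_da) simp
  finally have "m dvd u * (1 - u ^ (e - 1))"
    by (rule da_eq_iff_half_dvd[THEN iffD1, rotated]) (simp add: u_power_e algebra_simps)
  then have "m dvd 1 - u ^ (e - 1)" by (rule dvd_cancel_u)
  then show ?thesis by (simp add: cong_iff_dvd_diff dvd_diff_commute)
qed

text \<open>Compare the two expansions of \<phi>(a^2) = \<phi>(a a).\<close>
lemma r_sigma_cong_rot: "[r * sigma u (e - 1) = u - 2 * r - 1] (mod m)"
proof -
  have "da n (2 * u) = \<phi> (da n 1 \<otimes>\<^bsub>G\<^esub> da n 1)" by (simp add: phi_da_2 da_dba_mult)
  also have "\<dots> = \<phi> (da n 1) \<otimes>\<^bsub>G\<^esub> (\<phi> ^^ e) (da n 1)" by (simp add: phi_da_1_mult)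
  also have "\<dots> = da n (2 * r + 1 + (2 * (r * sigma u e) + 1))"
    by (simp only: funpow_da_1_rot phi_da_1_rot da_mult_da)
  finally have "m dvd u - r - r * sigma u e - 1"
    by (rule da_eq_iff_half_dvd[THEN iffD1, rotated]) (simp add: algebra_simps)
  moreover have "m dvd u ^ (e - 1) - 1" using u_power_cong_rot by (simp add: cong_iff_dvd_diff)
  ultimately have "m dvd - (u - r - r * sigma u e - 1) - r * (u ^ (e - 1) - 1)"
    by (meson dvd_diff dvd_minus_iff dvd_mult)
  also have "\<dots> = r * sigma u (e - 1) - (u - 2 * r - 1)" by (simp add: sigma_e algebra_simps)
  finally show ?thesis by (simp add: cong_iff_dvd_diff)
qed

text \<open>Compare the two expansions of \<phi>(b a^-1) = \<phi>(a b).\<close>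
lemma s_sigma_cong_rot: "[s * sigma u (e - 1) = - u + 2 * r + 1] (mod m)"
proof -
  have "dba n (2 * r + 2 * s + 2 * (- 1) * u + 1) = \<phi> (da n 1 \<otimes>\<^bsub>G\<^esub> dba n 0)"
    using phi_dba_odd_rot[of "- 1"] by (simp add: da_dba_mult)
  also have "\<dots> = \<phi> (da n 1) \<otimes>\<^bsub>G\<^esub> (\<phi> ^^ e) (dba n 0)" by (simp add: phi_da_1_mult)
  also have "\<dots> = dba n (2 * (s * sigma u e) - (2 * r + 1))"
    by (simp only: funpow_dba_0 phi_da_1_rot da_mult_dba)
  finally have "m dvd 2 * r + s - u + 1 - s * sigma u e"
    by (rule dba_eq_iff_half_dvd[THEN iffD1, rotated]) (simp add: algebra_simps)
  moreover have "m dvd u ^ (e - 1) - 1" using u_power_cong_rot by (simp add: cong_iff_dvd_diff)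
  ultimately have "m dvd - (2 * r + s - u + 1 - s * sigma u e) - s * (u ^ (e - 1) - 1)"
    by (meson dvd_diff dvd_minus_iff dvd_mult)
  also have "\<dots> = s * sigma u (e - 1) - (- u + 2 * r + 1)" by (simp add: sigma_e algebra_simps)
  finally show ?thesis by (simp add: cong_iff_dvd_diff)
qed

text \<open>The condition on u^j is implied by the other two, since (u - 1) \<sigma>(u, j) = u^j - 1.\<close>
lemma perm_order_dvd_iff_rot:
  "k dvd j \<longleftrightarrow> [r * sigma u j = 0] (mod m) \<and> [s * sigma u j = 0] (mod m)"
proof -
  have u_power: "m dvd u ^ j - 1" if r_dvd: "m dvd r * sigma u j"
  proof -
    have "m dvd r * sigma u (e - 1) - (u - 2 * r - 1)"
      using r_sigma_cong_rot by (simp add: cong_iff_dvd_diff)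
    with r_dvd have "m dvd sigma u (e - 1) * (r * sigma u j)
        - sigma u j * (r * sigma u (e - 1) - (u - 2 * r - 1)) + 2 * (r * sigma u j)"
      by (meson dvd_add dvd_diff dvd_mult)
    also have "\<dots> = u ^ j - 1" by (simp add: power_minus_one_eq_sigma algebra_simps)
    finally show ?thesis .
  qed
  have "k dvd j \<longleftrightarrow> (\<forall>x\<in>carrier G. (\<phi> ^^ j) x = x)" by (rule funpow_id_iff_dvd[symmetric])
  also have "\<dots> \<longleftrightarrow> m dvd u ^ j - 1 \<and> (\<phi> ^^ j) (dba n 0) = dba n 0 \<and> (\<phi> ^^ j) (da n 1) = da n 1"
    by (rule funpow_id_iff_generators)
  also have "(\<phi> ^^ j) (da n 1) = da n 1 \<longleftrightarrow> m dvd r * sigma u j"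
    unfolding funpow_da_1_rot by (rule da_eq_iff_half_dvd) simp
  also have "(\<phi> ^^ j) (dba n 0) = dba n 0 \<longleftrightarrow> m dvd s * sigma u j"
    unfolding funpow_dba_0 by (rule dba_eq_iff_half_dvd) simp
  finally show ?thesis using u_power by (auto simp: cong_0_iff)
qed

lemma perm_order_least_rot:
  "[r * sigma u k = 0] (mod m)" "[s * sigma u k = 0] (mod m)"
  "0 < j \<Longrightarrow> j < k \<Longrightarrow> \<not> ([r * sigma u j = 0] (mod m) \<and> [s * sigma u j = 0] (mod m))"
  using perm_order_dvd_iff_rot[of k] perm_order_dvd_iff_rot[of j] by (auto dest: nat_dvd_not_less)

text \<open>Otherwise \<phi>^(e-1) would fix both generators, contradicting e \<noteq> 1 (mod k).\<close>
lemma not_cong_rot: "\<not> [u - 1 - 2 * r = 0] (mod m)"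
proof
  assume "[u - 1 - 2 * r = 0] (mod m)"
  then have zero: "m dvd u - 1 - 2 * r" by (simp add: cong_0_iff)
  have "m dvd (r * sigma u (e - 1) - (u - 2 * r - 1)) + (u - 1 - 2 * r)"
    using dvd_add[OF r_sigma_cong_rot[unfolded cong_iff_dvd_diff] zero] .
  moreover have "m dvd (s * sigma u (e - 1) - (- u + 2 * r + 1)) - (u - 1 - 2 * r)"
    using dvd_diff[OF s_sigma_cong_rot[unfolded cong_iff_dvd_diff] zero] .
  ultimately have "[r * sigma u (e - 1) = 0] (mod m)" "[s * sigma u (e - 1) = 0] (mod m)"
    by (simp_all add: cong_0_iff algebra_simps)
  then have "k dvd e - 1" using perm_order_dvd_iff_rot by blast
  then have "\<not> 0 < e - 1" using dvd_imp_le[of k "e - 1"] e_less by linarith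
  then have "e = 1" using e_pos by linarith
  then show False using e_not_cong_1 by simp
qed

end

context
  assumes phi_da_1_reflection: "fst (\<phi> (da n 1))"
begin

lemma phi_da_1_refl: "\<phi> (da n 1) = dba n (2 * r + 1)"
  using phi_da_1 phi_da_1_reflection by simp

lemma phi_da_odd_refl: "\<phi> (da n (2 * i + 1)) = dba n (2 * r - 2 * i * u + 1)"
proof -
  have "\<phi> (da n (2 * i + 1)) = dba n (2 * r + 1 - 2 * i * u)"
    by (simp add: phi_da_odd phi_da_1_refl da_dba_mult)
  then show ?thesis by (simp add: algebra_simps)
qed

lemma phi_dba_odd_refl: "\<phi> (dba n (2 * i + 1)) = da n (2 * r - 2 * s - 2 * i * u + 1)"
proof -
  have "\<phi> (dba n (2 * i + 1)) = da n (2 * r + 1 - (2 * s + 2 * i * u))"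
    by (simp add: phi_dba_odd phi_da_1_refl da_dba_mult)
  then show ?thesis by (simp add: algebra_simps)
qed

text \<open>\<phi>^2 maps a^(2t+1) to a^(2(c + u^2 t)+1).\<close>
definition c :: int where "c = r - s - r * u"

lemma funpow_da_1_even_refl: "(\<phi> ^^ (2 * l)) (da n 1) = da n (2 * (c * zeta u (2 * l)) + 1)"
proof (induction l)
  case (Suc l)
  define t where "t = c * zeta u (2 * l)"
  have "(\<phi> ^^ (2 * Suc l)) (da n 1) = \<phi> (\<phi> (da n (2 * t + 1)))"
    by (simp add: Suc t_def)
  also have "\<phi> (da n (2 * t + 1)) = dba n (2 * (r - t * u) + 1)"
    by (subst phi_da_odd_refl) (simp add: algebra_simps)
  also have "\<phi> \<dots> = da n (2 * r - 2 * s - 2 * (r - t * u) * u + 1)" by (rule phi_dba_odd_refl)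
  also have "\<dots> = da n (2 * (c * zeta u (2 * Suc l)) + 1)"
    by (simp only: zeta_Suc t_def c_def) (simp add: algebra_simps power2_eq_square)
  finally show ?case .
qed simp

text \<open>Compare the two expansions of \<phi>(a^3) = \<phi>(a a^2).\<close>
lemma u_power_cong_refl: "[u ^ (e - 1) = - 1] (mod m)"
proof -
  have "dba n (2 * r - 2 * 1 * u + 1) = \<phi> (da n 1 \<otimes>\<^bsub>G\<^esub> da n 2)"
    using phi_da_odd_refl[of 1] by (simp add: da_dba_mult)
  also have "\<dots> = \<phi> (da n 1) \<otimes>\<^bsub>G\<^esub> (\<phi> ^^ e) (da n (2 * 1))" by (simp add: phi_da_1_mult)
  also have "\<dots> = dba n (2 * r + 1 + 2 * u ^ e)"
    by (simp only: funpow_da_even phi_da_1_refl dba_mult_da) simp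
  finally have "m dvd u * (- 1 - u ^ (e - 1))"
    by (rule dba_eq_iff_half_dvd[THEN iffD1, rotated]) (simp add: u_power_e algebra_simps)
  then have "m dvd - 1 - u ^ (e - 1)" by (rule dvd_cancel_u)
  then show ?thesis using dvd_minus_iff[of m "- 1 - u ^ (e - 1)"] by (simp add: cong_iff_dvd_diff add.commute)
qed

text \<open>If e were even, \<phi>(a^2) = \<phi>(a) \<phi>^e(a) would be a reflection.\<close>
lemma odd_e: "odd e"
proof
  assume "even e"
  then obtain l where l: "e = 2 * l" by (auto elim!: evenE)
  have "da n (2 * u) = \<phi> (da n 1 \<otimes>\<^bsub>G\<^esub> da n 1)" by (simp add: phi_da_2 da_dba_mult)
  also have "\<dots> = \<phi> (da n 1) \<otimes>\<^bsub>G\<^esub> (\<phi> ^^ e) (da n 1)" by (simp add: phi_da_1_mult)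
  also have "\<dots> = dba n (2 * r + 1 + (2 * (c * zeta u (2 * l)) + 1))"
    by (simp only: l funpow_da_1_even_refl phi_da_1_refl dba_mult_da)
  finally show False by (simp add: da_neq_dba)
qed

definition L :: nat where "L = e div 2"

lemma e_eq: "e = Suc (2 * L)"
  using odd_e by (simp add: L_def)

text \<open>Compare the two expansions of \<phi>(a^2) = \<phi>(a a).\<close>
lemma c_zeta_cong_refl: "m dvd 1 + c * zeta u (2 * L)"
proof -
  define t where "t = c * zeta u (2 * L)"
  have "da n (2 * u) = \<phi> (da n 1 \<otimes>\<^bsub>G\<^esub> da n 1)" by (simp add: phi_da_2 da_dba_mult)
  also have "\<dots> = \<phi> (da n 1) \<otimes>\<^bsub>G\<^esub> \<phi> ((\<phi> ^^ (2 * L)) (da n 1))"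
    by (simp add: phi_da_1_mult e_eq)
  also have "\<phi> ((\<phi> ^^ (2 * L)) (da n 1)) = dba n (2 * r - 2 * t * u + 1)"
    by (simp only: funpow_da_1_even_refl t_def phi_da_odd_refl)
  also have "\<phi> (da n 1) \<otimes>\<^bsub>G\<^esub> dba n (2 * r - 2 * t * u + 1) = da n (- 2 * t * u)"
    by (simp add: phi_da_1_refl da_dba_mult)
  finally have "m dvd u * (1 + t)"
    by (rule da_eq_iff_half_dvd[THEN iffD1, rotated]) (simp add: algebra_simps)
  then show ?thesis unfolding t_def by (rule dvd_cancel_u)
qed

lemma r_xi_cong_refl: "[r * xi u (e - 1) = s * zeta u (e - 1) - 1] (mod m)"
proof -
  have "m dvd 1 + c * zeta u (2 * L)" by (rule c_zeta_cong_refl)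
  also have "1 + c * zeta u (2 * L) = r * xi u (2 * L) - (s * zeta u (2 * L) - 1)"
    by (simp add: xi_eq_zeta c_def algebra_simps)
  finally have "m dvd r * xi u (2 * L) - (s * zeta u (2 * L) - 1)" .
  then show ?thesis using e_eq by (simp add: cong_iff_dvd_diff)
qed

text \<open>Compare the two expansions of \<phi>(b a^-1) = \<phi>(a b).\<close>
lemma s_sigma_cong_refl: "[s * sigma u (e - 1) = u + 2 * r + 1] (mod m)"
proof -
  have "da n (2 * r - 2 * s - 2 * (- 1) * u + 1) = \<phi> (da n 1 \<otimes>\<^bsub>G\<^esub> dba n 0)"
    using phi_dba_odd_refl[of "- 1"] by (simp add: da_dba_mult)
  also have "\<dots> = \<phi> (da n 1) \<otimes>\<^bsub>G\<^esub> (\<phi> ^^ e) (dba n 0)" by (simp add: phi_da_1_mult)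
  also have "\<dots> = da n (2 * (s * sigma u e) - (2 * r + 1))"
    by (simp only: funpow_dba_0 phi_da_1_refl dba_mult_dba)
  finally have "m dvd 2 * r - s + u + 1 - s * sigma u e"
    by (rule da_eq_iff_half_dvd[THEN iffD1, rotated]) (simp add: algebra_simps)
  moreover have "m dvd u ^ (e - 1) + 1" using u_power_cong_refl by (simp add: cong_iff_dvd_diff)
  ultimately have "m dvd - (2 * r - s + u + 1 - s * sigma u e) - s * (u ^ (e - 1) + 1)"
    by (meson dvd_diff dvd_minus_iff dvd_mult)
  also have "\<dots> = s * sigma u (e - 1) - (u + 2 * r + 1)" by (simp add: sigma_e algebra_simps)
  finally show ?thesis by (simp add: cong_iff_dvd_diff)
qed

lemma e_gt_1: "1 < e"
proof (rule ccontr)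
  assume "\<not> 1 < e"
  then have "e = 1" using e_pos by simp
  then show False using u_power_cong_refl m_not_dvd_2 by (simp add: cong_iff_dvd_diff)
qed

lemma perm_order_dvd_refl: "k dvd 4 * L"
proof -
  define W where "W = u ^ (2 * L)"
  have W: "m dvd W + 1"
    using u_power_cong_refl e_eq unfolding W_def by (simp add: cong_iff_dvd_diff)
  have four_L: "4 * L = 2 * L + 2 * L" by simp
  have "m dvd (W - 1) * (W + 1)" using W by simp
  also have "(W - 1) * (W + 1) = u ^ (4 * L) - 1"
    unfolding four_L power_add W_def by (simp add: algebra_simps)
  finally have "m dvd u ^ (4 * L) - 1" .
  moreover have "(\<phi> ^^ (4 * L)) (dba n 0) = dba n 0"
  proof -
    have "sigma u (4 * L) = sigma u (2 * L) * (1 + W)"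
      unfolding four_L sigma_add W_def by (simp add: algebra_simps)
    then have "m dvd s * sigma u (4 * L)" using W by (simp add: add.commute)
    then show ?thesis unfolding funpow_dba_0 by (rule dba_eq_iff_half_dvd[THEN iffD2, rotated]) simp
  qed
  moreover have "(\<phi> ^^ (4 * L)) (da n 1) = da n 1"
  proof -
    have "zeta u (2 * (2 * L)) = zeta u (2 * L) * (1 + W)"
      using zeta_add[of u L L] by (simp only: W_def mult_2[of L, symmetric]) (simp add: algebra_simps)
    then have "m dvd c * zeta u (2 * (2 * L))" using W by (simp add: add.commute)
    then show ?thesis
      using funpow_da_1_even_refl[of "2 * L"]
      by (simp add: da_eq_iff_half_dvd[of _ _ "c * zeta u (2 * (2 * L))"] mult.assoc)
  qed
  ultimately show ?thesis using funpow_id_iff_generators funpow_id_iff_dvd by blast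
qed

text \<open>k divides 2(e - 1) and exceeds e, so it is 2(e - 1).\<close>
lemma perm_order_refl: "k = 2 * (e - 1)"
proof -
  obtain q where q: "4 * L = k * q" using perm_order_dvd_refl by (auto elim!: dvdE)
  have "0 < L" using e_gt_1 e_eq by simp
  then have "q \<noteq> 0" using q by (metis mult_0_right mult_is_0 zero_neq_numeral neq0_conv)
  moreover have "q < 2"
  proof (rule ccontr)
    assume "\<not> q < 2"
    then have "k * 2 \<le> 4 * L" unfolding q by simp
    then show False using e_less e_eq by linarith
  qed
  ultimately have "q = 1" by simp
  then show ?thesis using q e_eq by simp
qed

end

end

theorem theorem5:
  fixes n :: nat and \<phi> :: "bool \<times> int \<Rightarrow> bool \<times> int" and \<pi> :: "bool \<times> int \<Rightarrow> nat"
    and k :: nat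
  assumes n8: "n \<ge> 8" and neven: "even n"
    and smooth: "smooth_skew (dihedral n) \<phi> \<pi>"
    and ker: "skew_kernel (dihedral n) \<phi> \<pi> = generate (dihedral n) {da n 2, dba n 0}"
    and kdef: "k = perm_order (dihedral n) \<phi>"
  shows
   "(\<exists>r s u e :: int.
       0 \<le> r \<and> r < int (n div 2) \<and> 0 \<le> s \<and> s < int (n div 2) \<and>
       gcd u (int (n div 2)) = 1 \<and> 1 \<le> e \<and> e \<le> int k - 1 \<and>
       (\<forall>i::int.
          \<phi> (da n (2*i)) = da n (2*i*u) \<and>
          \<phi> (da n (2*i+1)) = da n (2*i*u + 2*r + 1) \<and>
          \<phi> (dba n (2*i)) = dba n (2*i*u + 2*s) \<and>
          \<phi> (dba n (2*i+1)) = dba n (2*r + 2*s + 2*i*u + 1) \<and>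
          [int (\<pi> (da n (2*i))) = 1] (mod int k) \<and>
          [int (\<pi> (dba n (2*i))) = 1] (mod int k) \<and>
          [int (\<pi> (da n (2*i+1))) = e] (mod int k) \<and>
          [int (\<pi> (dba n (2*i+1))) = e] (mod int k)) \<and>
       \<not> [u - 1 - 2*r = 0] (mod int (n div 2)) \<and>
       0 < k \<and>
       [r * sigma u k = 0] (mod int (n div 2)) \<and> [s * sigma u k = 0] (mod int (n div 2)) \<and>
       (\<forall>j::nat. 0 < j \<and> j < k \<longrightarrow>
          \<not> ([r * sigma u j = 0] (mod int (n div 2)) \<and> [s * sigma u j = 0] (mod int (n div 2)))) \<and>
       gcd e (int k) = 1 \<and> \<not> [e = 1] (mod int k) \<and> [e^2 = 1] (mod int k) \<and>
       [u ^ nat (e - 1) = 1] (mod int (n div 2)) \<and>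
       [r * sigma u (nat (e - 1)) = u - 2*r - 1] (mod int (n div 2)) \<and>
       [s * sigma u (nat (e - 1)) = - u + 2*r + 1] (mod int (n div 2)))
  \<or>
   (\<exists>r s u e :: int.
       0 \<le> r \<and> r < int (n div 2) \<and> 0 \<le> s \<and> s < int (n div 2) \<and>
       gcd u (int (n div 2)) = 1 \<and> odd e \<and> e > 1 \<and> int k = 2 * (e - 1) \<and>
       (\<forall>i::int.
          \<phi> (da n (2*i)) = da n (2*i*u) \<and>
          \<phi> (da n (2*i+1)) = dba n (2*r - 2*i*u + 1) \<and>
          \<phi> (dba n (2*i)) = dba n (2*s + 2*i*u) \<and>
          \<phi> (dba n (2*i+1)) = da n (2*r - 2*s - 2*i*u + 1) \<and>
          [int (\<pi> (da n (2*i))) = 1] (mod int k) \<and>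
          [int (\<pi> (dba n (2*i))) = 1] (mod int k) \<and>
          [int (\<pi> (da n (2*i+1))) = e] (mod int k) \<and>
          [int (\<pi> (dba n (2*i+1))) = e] (mod int k)) \<and>
       [u ^ nat (e - 1) = - 1] (mod int (n div 2)) \<and>
       [s * sigma u (nat (e - 1)) = u + 2*r + 1] (mod int (n div 2)) \<and>
       [r * xi u (nat (e - 1)) = s * zeta u (nat (e - 1)) - 1] (mod int (n div 2)))"
proof -
  interpret dihedral_smooth_skew n \<phi> \<pi> using n8 neven smooth ker by unfold_locales
  have e: "1 \<le> e" "nat (int e - 1) = e - 1" using e_pos by simp_all
  have e_int: "\<not> [int e = 1] (mod int k)" "[(int e)\<^sup>2 = 1] (mod int k)"
    using e_not_cong_1 e_square_cong unfolding kdef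
    by (metis cong_int_iff of_nat_1, metis cong_int_iff of_nat_1 of_nat_mult power2_eq_square)
  note common = r_bounds s_bounds coprime_u phi_da_even e e_int e_pos e_less coprime_e_perm_order
  show ?thesis
  proof (cases "fst (\<phi> (da n 1))")
    case False
    note rot = phi_da_odd_rot[OF False] phi_dba_odd_rot[OF False] perm_order_least_rot[OF False]
      not_cong_rot[OF False] u_power_cong_rot[OF False] r_sigma_cong_rot[OF False] s_sigma_cong_rot[OF False]
      phi_dba_even[unfolded add.commute[of "2 * s"]] perm_order_pos
    show ?thesis
      by (rule disjI1, rule exI[of _ r], rule exI[of _ s], rule exI[of _ u], rule exI[of _ "int e"],
          intro conjI allI impI; insert common rot; simp add: m_def kdef)
  next
    case True
    note refl = phi_da_odd_refl[OF True] phi_dba_odd_refl[OF True] odd_e[OF True] e_gt_1[OF True]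
      perm_order_refl[OF True] u_power_cong_refl[OF True] s_sigma_cong_refl[OF True] r_xi_cong_refl[OF True]
      phi_dba_even
    show ?thesis
      by (rule disjI2, rule exI[of _ r], rule exI[of _ s], rule exI[of _ u], rule exI[of _ "int e"],
          intro conjI allI; insert common refl; simp add: m_def kdef)
  qed
qed

end
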